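(* Let $I=\{1,2\}$, $J=\{-1,-2\}$, and let $\{\tau_{m,n}(\boldsymbol t)\}_{(m,n)\in\mathbb Z^2}$ be a nowhere-vanishing solution of the lattice $q$-UC hierarchy satisfying the homogeneity condition $\tau_{m,n}(q\boldsymbol t)=q^{d_{m,n}}\tau_{m,n}(\boldsymbol t)$, where $d_{m,n}\in\mathbb C$ satisfy $d_{m,n}+d_{m+1,n+1}=d_{m,n+1}+d_{m+1,n}$. Put $w_{m,n}=\tau_{m+1,n}/\tau_{m,n+1}$, $c_{m,n}=q^{d_{m+1,n}-d_{m,n+1}}$ (so that $T_1T_2(w_{m,n})=c_{m,n}T_{-1}T_{-2}(w_{m,n})$), and $$f_{m,n}=\frac{w^{(1)}_{m,n}}{w^{(-1)}_{m,n}},\qquad g_{m,n}=\frac{w^{(1,-1)}_{m,n}}{w^{(-1,-2)}_{m,n}}.$$ Then, with $T=T_1T_2$ and whenever the denominators are nonzero, $$\frac{T(f_{m,n})}{f_{m+1,n+1}}=\frac{c_{m,n}}{c_{m,n+1}}\cdot\frac{\bigl(g_{m+1,n}-\frac{t_1}{t_{-2}}\bigr)\bigl(g_{m,n+1}-c_{m,n+1}\frac{t_{-1}}{t_2}\bigr)}{\bigl(g_{m,n+1}-\frac{t_1}{t_{-2}}\bigr)\bigl(g_{m+1,n}-c_{m+1,n}\frac{t_{-1}}{t_2}\bigr)},$$ $$\frac{g_{m,n}}{T^{-1}(g_{m+1,n+1})}=\frac{c_{m+1,n}}{c_{m+1,n+1}}\cdot\frac{\bigl(f_{m+1,n}-\frac{t_1}{t_{-1}}\bigr)\bigl(f_{m,n+1}-qc_{m,n+1}\frac{t_{-2}}{t_2}\bigr)}{\bigl(f_{m,n+1}-\frac{t_1}{t_{-1}}\bigr)\bigl(f_{m+1,n}-qc_{m+1,n}\frac{t_{-2}}{t_2}\bigr)}.$$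 Consequently, $T$ acts on the variables $f_{m,n},g_{m,n}$ by birational transformations: $T^{\pm1}(f_{m,n}),T^{\pm1}(g_{m,n})$ are rational functions of the $f_{k,l},g_{k,l}$ with coefficients rational in $t_{\pm1},t_{\pm2}$ and the $c_{k,l}$. Equivalently, with $\alpha=t_1/t_{-2}$, $\beta=t_{-1}/t_2$, $\gamma=t_1/t_{-1}$, $\delta=t_{-2}/t_2$ (so $\alpha\delta/(\beta\gamma)=1$ and $T:(\alpha,\beta,\gamma,\delta)\mapsto(q\alpha,\beta/q,q\gamma,\delta/q)$), writing $\overline F=T(F)$: $$\overline{f_{m,n}}=\frac{c_{m,n}}{c_{m,n+1}}\frac{(g_{m+1,n}-\alpha)(g_{m,n+1}-c_{m,n+1}\beta)}{(g_{m,n+1}-\alpha)(g_{m+1,n}-c_{m+1,n}\beta)}f_{m+1,n+1},$$ $$\overline{g_{m,n}}=\frac{c_{m+1,n}}{c_{m+1,n+1}}\frac{(\overline{f_{m+1,n}}-q\gamma)(\overline{f_{m,n+1}}-c_{m,n+1}\delta)}{(\overline{f_{m,n+1}}-q\gamma)(\overline{f_{m+1,n}}-c_{m+1,n}\delta)}g_{m+1,n+1}.$$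
   Context: $q\in\mathbb C^*$, $\boldsymbol t=(t_1,t_2,t_{-1},t_{-2})$. $T_k$ is the $q$-shift: $T_k(t_k)=qt_k$ for $k\in\{1,2\}$, $T_k(t_k)=q^{-1}t_k$ for $k\in\{-1,-2\}$, $T_k(t_l)=t_l$ for $l\ne k$. Notation: $F^{(i_1,\dots,i_r)}=T_{i_1}\cdots T_{i_r}(F)$. The lattice $q$-UC hierarchy is the system $$t_iT_i(\tau_{m,n+1})T_j(\tau_{m+1,n})-t_jT_j(\tau_{m,n+1})T_i(\tau_{m+1,n})=(t_i-t_j)T_iT_j(\tau_{m,n})\tau_{m+1,n+1}$$ for all $i,j\in\{1,2,-1,-2\}$ and all $(m,n)\in\mathbb Z^2$. *)

theory Defs
  imports "HOL-Analysis.Analysis"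
begin

text \<open>Indices of the time variables: P1, P2, N1, N2 stand for 1, 2, -1, -2.
  A point t = (t_1,t_2,t_{-1},t_{-2}) is a function ix => complex.\<close>

datatype ix = P1 | P2 | N1 | N2

definition shiftT :: "complex \<Rightarrow> ix \<Rightarrow> (ix \<Rightarrow> complex) \<Rightarrow> (ix \<Rightarrow> complex)" where
  "shiftT q k t = t(k := (if k = P1 \<or> k = P2 then q * t k else t k / q))"

definition Top :: "complex \<Rightarrow> ix \<Rightarrow> ((ix \<Rightarrow> complex) \<Rightarrow> complex) \<Rightarrow> ((ix \<Rightarrow> complex) \<Rightarrow> complex)" where
  "Top q k F = (\<lambda>t. F (shiftT q k t))"

definition TT :: "complex \<Rightarrow> ((ix \<Rightarrow> complex) \<Rightarrow> complex) \<Rightarrow> ((ix \<Rightarrow> complex) \<Rightarrow> complex)" where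
  "TT q F = Top q P1 (Top q P2 F)"

definition TTinv :: "complex \<Rightarrow> ((ix \<Rightarrow> complex) \<Rightarrow> complex) \<Rightarrow> ((ix \<Rightarrow> complex) \<Rightarrow> complex)" where
  "TTinv q F = Top (inverse q) P1 (Top (inverse q) P2 F)"

definition tdom :: "(ix \<Rightarrow> complex) set" where
  "tdom = {t. \<forall>i. t i \<noteq> 0}"

definition qUC_hierarchy :: "complex \<Rightarrow> (int \<Rightarrow> int \<Rightarrow> (ix \<Rightarrow> complex) \<Rightarrow> complex) \<Rightarrow> bool" where
  "qUC_hierarchy q \<tau> \<longleftrightarrow>
    (\<forall>i j m n t. t \<in> tdom \<longrightarrow>
      t i * Top q i (\<tau> m (n+1)) t * Top q j (\<tau> (m+1) n) t
      - t j * Top q j (\<tau> m (n+1)) t * Top q i (\<tau> (m+1) n) t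
      = (t i - t j) * Top q i (Top q j (\<tau> m n)) t * \<tau> (m+1) (n+1) t)"

definition nowhere_vanishing :: "(int \<Rightarrow> int \<Rightarrow> (ix \<Rightarrow> complex) \<Rightarrow> complex) \<Rightarrow> bool" where
  "nowhere_vanishing \<tau> \<longleftrightarrow> (\<forall>m n t. t \<in> tdom \<longrightarrow> \<tau> m n t \<noteq> 0)"

definition wfun :: "(int \<Rightarrow> int \<Rightarrow> (ix \<Rightarrow> complex) \<Rightarrow> complex) \<Rightarrow> int \<Rightarrow> int \<Rightarrow> (ix \<Rightarrow> complex) \<Rightarrow> complex" where
  "wfun \<tau> m n = (\<lambda>t. \<tau> (m+1) n t / \<tau> m (n+1) t)"

definition cfun :: "complex \<Rightarrow> (int \<Rightarrow> int \<Rightarrow> complex) \<Rightarrow> int \<Rightarrow> int \<Rightarrow> complex" where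
  "cfun q d m n = q powr (d (m+1) n - d m (n+1))"

definition ffun :: "complex \<Rightarrow> (int \<Rightarrow> int \<Rightarrow> (ix \<Rightarrow> complex) \<Rightarrow> complex) \<Rightarrow> int \<Rightarrow> int \<Rightarrow> (ix \<Rightarrow> complex) \<Rightarrow> complex" where
  "ffun q \<tau> m n = (\<lambda>t. Top q P1 (wfun \<tau> m n) t / Top q N1 (wfun \<tau> m n) t)"

definition gfun :: "complex \<Rightarrow> (int \<Rightarrow> int \<Rightarrow> (ix \<Rightarrow> complex) \<Rightarrow> complex) \<Rightarrow> int \<Rightarrow> int \<Rightarrow> (ix \<Rightarrow> complex) \<Rightarrow> complex" where
  "gfun q \<tau> m n = (\<lambda>t. Top q P1 (Top q N1 (wfun \<tau> m n)) t / Top q N1 (Top q N2 (wfun \<tau> m n)) t)"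

end

theory Submission
  imports Defs
begin

(* All computations take place on the q-lattice through a point p:
   qpt q p a b c e is the point T_1^a T_2^b T_{-1}^c T_{-2}^e p (integer exponents).
   The shifts T_k and the dilation t -> q t act on it by translations, so the
   hierarchy and the homogeneity condition become identities between values of
   tau at lattice points.

   1. f and g are cross-ratios of tau values (ffun_tau, gfun_tau).
   2. Each of g - alpha, g - c beta, f - gamma, f - q c delta is a prefactor times a
      ratio of two tau products: one bilinear equation of the hierarchy, for the
      index pairs (1,-2), (2,-1), (1,-1), (2,-2), rearranged by ratio_minus_quotient,
      plus homogeneity for the two c-terms.
   3. In the cross-ratios of the theorem the prefactors and the common denominators
      cancel (common_factor_cross_ratio).  What remains is compared with T f / f and
      T g / g computed directly with homogeneity; for g the d-condition enters via
      c_{m+1,n} / c_{m+1,n+1} = c_{m,n} / c_{m,n+1} (cfun_ratio_shift).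
   4. The theorem collects the evolution of f (ratio and product form), the evolution
      of g, and its backward form obtained at the point T^{-1} t. *)

definition qpt :: "complex \<Rightarrow> (ix \<Rightarrow> complex) \<Rightarrow> int \<Rightarrow> int \<Rightarrow> int \<Rightarrow> int \<Rightarrow> ix \<Rightarrow> complex" where
  "qpt q p a b c e = (\<lambda>i. case i of
      P1 \<Rightarrow> p P1 * q powi a | P2 \<Rightarrow> p P2 * q powi b
    | N1 \<Rightarrow> p N1 * q powi (-c) | N2 \<Rightarrow> p N2 * q powi (-e))"

lemma qpt_apply [simp]:
  "qpt q p a b c e P1 = p P1 * q powi a" "qpt q p a b c e P2 = p P2 * q powi b"
  "qpt q p a b c e N1 = p N1 * q powi (-c)" "qpt q p a b c e N2 = p N2 * q powi (-e)"
  by (simp_all add: qpt_def)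

lemma qpt_origin [simp]: "qpt q p 0 0 0 0 = p"
  by (rule ext) (simp add: qpt_def split: ix.split)

(* Points of the torus have nonzero coordinates.  Not a simp rule: its left-hand
   side p i is not a higher-order pattern and makes the simplifier loop. *)
lemma tdom_nonzero: "p \<in> tdom \<Longrightarrow> p i \<noteq> 0"
  by (simp add: tdom_def)

lemma qpt_in_tdom [simp]: "p \<in> tdom \<Longrightarrow> q \<noteq> 0 \<Longrightarrow> qpt q p a b c e \<in> tdom"
  by (auto simp: tdom_def qpt_def split: ix.split)

lemma qpt_qpt [simp]:
  "q \<noteq> 0 \<Longrightarrow> qpt q (qpt q p a b c e) a' b' c' e' = qpt q p (a+a') (b+b') (c+c') (e+e')"
  using power_int_add[of q "-c" "-c'"] power_int_add[of q "-e" "-e'"]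
  by (intro ext) (simp add: qpt_def power_int_add mult.assoc split: ix.split)

lemma shiftT_qpt [simp]:
  assumes "q \<noteq> 0"
  shows "shiftT q P1 (qpt q p a b c e) = qpt q p (a+1) b c e"
    and "shiftT q P2 (qpt q p a b c e) = qpt q p a (b+1) c e"
    and "shiftT q N1 (qpt q p a b c e) = qpt q p a b (c+1) e"
    and "shiftT q N2 (qpt q p a b c e) = qpt q p a b c (e+1)"
  using assms
  by (auto intro!: ext simp: shiftT_def qpt_def power_int_add power_int_diff split: ix.split)

lemma shiftT_inverse_qpt [simp]:
  assumes "q \<noteq> 0"
  shows "shiftT (inverse q) P1 (qpt q p a b c e) = qpt q p (a-1) b c e"
    and "shiftT (inverse q) P2 (qpt q p a b c e) = qpt q p a (b-1) c e"
  using assms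
  by (auto intro!: ext simp: shiftT_def qpt_def power_int_diff field_simps split: ix.split)

lemma scale_qpt:
  "q \<noteq> 0 \<Longrightarrow> (\<lambda>i. q * qpt q p a b c e i) = qpt q p (a+1) (b+1) (c-1) (e-1)"
  by (rule ext) (auto simp: qpt_def power_int_add power_int_diff power_int_minus field_simps split: ix.split)

lemma shiftT_as_qpt:
  assumes "q \<noteq> 0"
  shows "shiftT q P1 p = qpt q p 1 0 0 0" "shiftT q P2 p = qpt q p 0 1 0 0"
    and "shiftT q N1 p = qpt q p 0 0 1 0" "shiftT q N2 p = qpt q p 0 0 0 1"
  using shiftT_qpt[OF assms, of p 0 0 0 0] by simp_all

lemma TT_at: "q \<noteq> 0 \<Longrightarrow> TT q F p = F (qpt q p 1 1 0 0)"
  by (simp add: TT_def Top_def shiftT_as_qpt)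

lemma TTinv_at: "q \<noteq> 0 \<Longrightarrow> TTinv q F p = F (qpt q p (-1) (-1) 0 0)"
  using shiftT_inverse_qpt[of q p 0 0 0 0] by (simp add: TTinv_def Top_def)

(* A bilinear relation u B - v A = k C turns B/A - v/u into a prefactor times C/A;
   this is how every hierarchy equation is used below. *)
lemma ratio_minus_quotient:
  fixes A B u v k C :: "'a::field"
  assumes "A \<noteq> 0" "u \<noteq> 0" "u * B - v * A = k * C"
  shows "B / A - v / u = k / u * (C / A)"
  using assms by (simp add: field_simps)

lemma common_factor_cross_ratio:
  fixes \<kappa> \<mu>\<^sub>1 \<mu>\<^sub>2 X\<^sub>1 X\<^sub>2 Y\<^sub>1 Y\<^sub>2 G\<^sub>1 G\<^sub>2 :: "'a::field"
  assumes "\<kappa> \<noteq> 0" "\<mu>\<^sub>1 \<noteq> 0" "X\<^sub>2 \<noteq> 0" "Y\<^sub>1 \<noteq> 0" "G\<^sub>1 \<noteq> 0" "G\<^sub>2 \<noteq> 0"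
  shows "(\<kappa> * (X\<^sub>1 / G\<^sub>1) * (\<mu>\<^sub>2 * (Y\<^sub>2 / G\<^sub>2))) / (\<kappa> * (X\<^sub>2 / G\<^sub>2) * (\<mu>\<^sub>1 * (Y\<^sub>1 / G\<^sub>1)))
    = \<mu>\<^sub>2 / \<mu>\<^sub>1 * (X\<^sub>1 * Y\<^sub>2 / (X\<^sub>2 * Y\<^sub>1))"
  using assms by (simp add: field_simps)

lemma cfun_nonzero: "q \<noteq> 0 \<Longrightarrow> cfun q d M N \<noteq> 0"
  by (simp add: cfun_def)

lemma cfun_eq: "cfun q d M N = q powr d (M+1) N / q powr d M (N+1)"
  by (simp add: cfun_def powr_diff)

lemma cfun_ratio_shift:
  assumes dcond: "\<forall>m n. d m n + d (m+1) (n+1) = d m (n+1) + d (m+1) n"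
  shows "cfun q d (m+1) n / cfun q d (m+1) (n+1) = cfun q d m n / cfun q d m (n+1)"
proof -
  have "d (m+1+1) n - d (m+1) (n+1) - (d (m+1+1) (n+1) - d (m+1) (n+1+1))
      = d (m+1) n - d m (n+1) - (d (m+1) (n+1) - d m (n+1+1))"
    using dcond[rule_format, of "m+1" n] dcond[rule_format, of m "n+1"] by algebra
  then show ?thesis
    unfolding cfun_def powr_diff[symmetric] by (rule arg_cong)
qed

context
  fixes q :: complex and \<tau> :: "int \<Rightarrow> int \<Rightarrow> (ix \<Rightarrow> complex) \<Rightarrow> complex"
    and d :: "int \<Rightarrow> int \<Rightarrow> complex"
  assumes q: "q \<noteq> 0"
    and hier: "qUC_hierarchy q \<tau>"
    and nz: "nowhere_vanishing \<tau>"
    and homog: "\<forall>m n s. s \<in> tdom \<longrightarrow> \<tau> m n (\<lambda>i. q * s i) = q powr (d m n) * \<tau> m n s"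
begin

lemma tau_nonzero [simp]: "p \<in> tdom \<Longrightarrow> \<tau> M N (qpt q p a b c e) \<noteq> 0"
  using nz q unfolding nowhere_vanishing_def by simp

lemma bilinear_at:
  assumes "p \<in> tdom"
  shows "p i * \<tau> M (N+1) (shiftT q i p) * \<tau> (M+1) N (shiftT q j p)
       - p j * \<tau> M (N+1) (shiftT q j p) * \<tau> (M+1) N (shiftT q i p)
       = (p i - p j) * \<tau> M N (shiftT q j (shiftT q i p)) * \<tau> (M+1) (N+1) p"
  using hier assms unfolding qUC_hierarchy_def Top_def by blast

lemma homogeneity_at:
  assumes "p \<in> tdom"
  shows "\<tau> M N (qpt q p (a+1) (b+1) c e) = q powr d M N * \<tau> M N (qpt q p a b (c+1) (e+1))"
  using homog[rule_format, OF qpt_in_tdom[OF assms q], of M N a b "c+1" "e+1"]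
  by (simp add: scale_qpt[OF q])

lemma ffun_tau:
  "ffun q \<tau> M N p = \<tau> (M+1) N (qpt q p 1 0 0 0) * \<tau> M (N+1) (qpt q p 0 0 1 0)
     / (\<tau> M (N+1) (qpt q p 1 0 0 0) * \<tau> (M+1) N (qpt q p 0 0 1 0))"
  by (simp add: ffun_def wfun_def Top_def shiftT_as_qpt q)

lemma gfun_tau:
  "gfun q \<tau> M N p = \<tau> (M+1) N (qpt q p 1 0 1 0) * \<tau> M (N+1) (qpt q p 0 0 1 1)
     / (\<tau> M (N+1) (qpt q p 1 0 1 0) * \<tau> (M+1) N (qpt q p 0 0 1 1))"
  by (simp add: gfun_def wfun_def Top_def shiftT_as_qpt q)

lemma gfun_minus_alpha:
  assumes p: "p \<in> tdom"
  shows "gfun q \<tau> M N p - p P1 / p N2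
    = (p N2 - p P1) / p N2
      * (\<tau> M N (qpt q p 1 0 1 1) * \<tau> (M+1) (N+1) (qpt q p 0 0 1 0)
         / (\<tau> M (N+1) (qpt q p 1 0 1 0) * \<tau> (M+1) N (qpt q p 0 0 1 1)))"
proof -
  have "p P1 * \<tau> M (N+1) (qpt q p 1 0 1 0) * \<tau> (M+1) N (qpt q p 0 0 1 1)
      - p N2 * \<tau> M (N+1) (qpt q p 0 0 1 1) * \<tau> (M+1) N (qpt q p 1 0 1 0)
      = (p P1 - p N2) * \<tau> M N (qpt q p 1 0 1 1) * \<tau> (M+1) (N+1) (qpt q p 0 0 1 0)"
    using bilinear_at[of "qpt q p 0 0 1 0" P1 M N N2] p q by simp
  then show ?thesis
    unfolding gfun_tau using p tdom_nonzero[OF p] by (intro ratio_minus_quotient) (auto simp: algebra_simps)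
qed

(* g - c t_{-1}/t_2: hierarchy equation for the pair (2,-1) at T_1 p, with homogeneity
   turning the two T_1 T_2-shifted tau values into the denominators of g. *)
lemma gfun_minus_c_beta:
  assumes p: "p \<in> tdom"
  shows "gfun q \<tau> M N p - cfun q d M N * (p N1 / p P2)
    = (p P2 - p N1) / (p P2 * q powr d M (N+1))
      * (\<tau> M N (qpt q p 1 1 1 0) * \<tau> (M+1) (N+1) (qpt q p 1 0 0 0)
         / (\<tau> M (N+1) (qpt q p 1 0 1 0) * \<tau> (M+1) N (qpt q p 0 0 1 1)))"
proof -
  have "p P2 * \<tau> M (N+1) (qpt q p 1 1 0 0) * \<tau> (M+1) N (qpt q p 1 0 1 0)
      - p N1 * \<tau> M (N+1) (qpt q p 1 0 1 0) * \<tau> (M+1) N (qpt q p 1 1 0 0)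
      = (p P2 - p N1) * \<tau> M N (qpt q p 1 1 1 0) * \<tau> (M+1) (N+1) (qpt q p 1 0 0 0)"
    using bilinear_at[of "qpt q p 1 0 0 0" P2 M N N1] p q by simp
  moreover have "\<tau> K L (qpt q p 1 1 0 0) = q powr d K L * \<tau> K L (qpt q p 0 0 1 1)" for K L
    using homogeneity_at[OF p, of K L 0 0 0 0] by simp
  ultimately have eq: "(p P2 * q powr d M (N+1)) * (\<tau> (M+1) N (qpt q p 1 0 1 0) * \<tau> M (N+1) (qpt q p 0 0 1 1))
      - (p N1 * q powr d (M+1) N) * (\<tau> M (N+1) (qpt q p 1 0 1 0) * \<tau> (M+1) N (qpt q p 0 0 1 1))
      = (p P2 - p N1) * (\<tau> M N (qpt q p 1 1 1 0) * \<tau> (M+1) (N+1) (qpt q p 1 0 0 0))"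
    by (simp add: algebra_simps)
  have c_beta: "cfun q d M N * (p N1 / p P2) = (p N1 * q powr d (M+1) N) / (p P2 * q powr d M (N+1))"
    by (simp add: cfun_eq mult.commute)
  show ?thesis
    unfolding gfun_tau c_beta by (rule ratio_minus_quotient) (use eq p q tdom_nonzero[OF p] in auto)
qed

lemma ffun_minus_gamma:
  assumes p: "p \<in> tdom"
  shows "ffun q \<tau> M N p - p P1 / p N1
    = (p N1 - p P1) / p N1
      * (\<tau> M N (qpt q p 1 0 1 0) * \<tau> (M+1) (N+1) p
         / (\<tau> M (N+1) (qpt q p 1 0 0 0) * \<tau> (M+1) N (qpt q p 0 0 1 0)))"
proof -
  have "p P1 * \<tau> M (N+1) (qpt q p 1 0 0 0) * \<tau> (M+1) N (qpt q p 0 0 1 0)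
      - p N1 * \<tau> M (N+1) (qpt q p 0 0 1 0) * \<tau> (M+1) N (qpt q p 1 0 0 0)
      = (p P1 - p N1) * \<tau> M N (qpt q p 1 0 1 0) * \<tau> (M+1) (N+1) p"
    using bilinear_at[of p P1 M N N1] p q by (simp add: shiftT_as_qpt)
  then show ?thesis
    unfolding ffun_tau using p tdom_nonzero[OF p] by (intro ratio_minus_quotient) (auto simp: algebra_simps)
qed

(* f - q c t_{-2}/t_2: hierarchy equation for the pair (2,-2) at T_1 T_{-2}^{-1} p,
   again combined with homogeneity. *)
lemma ffun_minus_qc_delta:
  assumes p: "p \<in> tdom"
  shows "ffun q \<tau> M N p - q * cfun q d M N * (p N2 / p P2)
    = (p P2 - q * p N2) / (p P2 * q powr d M (N+1))
      * (\<tau> M N (qpt q p 1 1 0 0) * \<tau> (M+1) (N+1) (qpt q p 1 0 0 (-1))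
         / (\<tau> M (N+1) (qpt q p 1 0 0 0) * \<tau> (M+1) N (qpt q p 0 0 1 0)))"
proof -
  have "p P2 * \<tau> M (N+1) (qpt q p 1 1 0 (-1)) * \<tau> (M+1) N (qpt q p 1 0 0 0)
      - q * p N2 * \<tau> M (N+1) (qpt q p 1 0 0 0) * \<tau> (M+1) N (qpt q p 1 1 0 (-1))
      = (p P2 - q * p N2) * \<tau> M N (qpt q p 1 1 0 0) * \<tau> (M+1) (N+1) (qpt q p 1 0 0 (-1))"
    using bilinear_at[of "qpt q p 1 0 0 (-1)" P2 M N N2] p q by (simp add: mult.commute)
  moreover have "\<tau> K L (qpt q p 1 1 0 (-1)) = q powr d K L * \<tau> K L (qpt q p 0 0 1 0)" for K L
    using homogeneity_at[OF p, of K L 0 0 0 "-1"] by simp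
  ultimately have eq: "(p P2 * q powr d M (N+1)) * (\<tau> (M+1) N (qpt q p 1 0 0 0) * \<tau> M (N+1) (qpt q p 0 0 1 0))
      - (q * p N2 * q powr d (M+1) N) * (\<tau> M (N+1) (qpt q p 1 0 0 0) * \<tau> (M+1) N (qpt q p 0 0 1 0))
      = (p P2 - q * p N2) * (\<tau> M N (qpt q p 1 1 0 0) * \<tau> (M+1) (N+1) (qpt q p 1 0 0 (-1)))"
    by (simp add: algebra_simps)
  have qc_delta: "q * cfun q d M N * (p N2 / p P2) = (q * p N2 * q powr d (M+1) N) / (p P2 * q powr d M (N+1))"
    by (simp add: cfun_eq mult_ac)
  show ?thesis
    unfolding ffun_tau qc_delta by (rule ratio_minus_quotient) (use eq p q tdom_nonzero[OF p] in auto)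
qed

(* f never vanishes, being a cross-ratio of nonzero tau values. *)
lemma ffun_nonzero: "p \<in> tdom \<Longrightarrow> ffun q \<tau> M N p \<noteq> 0"
  by (simp add: ffun_tau)

(* T f_{M,N}, with the doubly T_1-shifted tau values moved back by homogeneity. *)
lemma TT_ffun:
  assumes p: "p \<in> tdom"
  shows "TT q (ffun q \<tau> M N) p
    = cfun q d M N * (\<tau> (M+1) N (qpt q p 1 0 1 1) * \<tau> M (N+1) (qpt q p 1 1 1 0))
      / (\<tau> M (N+1) (qpt q p 1 0 1 1) * \<tau> (M+1) N (qpt q p 1 1 1 0))"
proof -
  have "\<tau> K L (qpt q p 2 1 0 0) = q powr d K L * \<tau> K L (qpt q p 1 0 1 1)" for K L
    using homogeneity_at[OF p, of K L 1 0 0 0] by simp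
  then show ?thesis
    unfolding TT_at[OF q] ffun_tau using q by (simp add: cfun_eq mult.assoc)
qed

lemma gfun_cross_ratio:
  assumes p: "p \<in> tdom"
    and alpha: "gfun q \<tau> m (n+1) p - p P1 / p N2 \<noteq> 0"
    and beta: "gfun q \<tau> (m+1) n p - cfun q d (m+1) n * (p N1 / p P2) \<noteq> 0"
  shows "((gfun q \<tau> (m+1) n p - p P1 / p N2) * (gfun q \<tau> m (n+1) p - cfun q d m (n+1) * (p N1 / p P2)))
        / ((gfun q \<tau> m (n+1) p - p P1 / p N2) * (gfun q \<tau> (m+1) n p - cfun q d (m+1) n * (p N1 / p P2)))
     = cfun q d m (n+1) *
       (\<tau> (m+1) n (qpt q p 1 0 1 1) * \<tau> m (n+1) (qpt q p 1 1 1 0)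
        * \<tau> (m+2) (n+1) (qpt q p 0 0 1 0) * \<tau> (m+1) (n+2) (qpt q p 1 0 0 0)
       / (\<tau> m (n+1) (qpt q p 1 0 1 1) * \<tau> (m+1) n (qpt q p 1 1 1 0)
        * \<tau> (m+1) (n+2) (qpt q p 0 0 1 0) * \<tau> (m+2) (n+1) (qpt q p 1 0 0 0)))"
proof -
  have "p N2 - p P1 \<noteq> 0"
    using alpha unfolding gfun_minus_alpha[OF p] by auto
  moreover have "p P2 - p N1 \<noteq> 0"
    using beta unfolding gfun_minus_c_beta[OF p] by auto
  ultimately show ?thesis
    unfolding gfun_minus_alpha[OF p] gfun_minus_c_beta[OF p]
    by (subst common_factor_cross_ratio) (use p q tdom_nonzero[OF p] in \<open>simp_all add: cfun_eq field_simps\<close>)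
qed

lemma ffun_evolution:
  assumes p: "p \<in> tdom"
    and alpha: "gfun q \<tau> m (n+1) p - p P1 / p N2 \<noteq> 0"
    and beta: "gfun q \<tau> (m+1) n p - cfun q d (m+1) n * (p N1 / p P2) \<noteq> 0"
  shows "TT q (ffun q \<tau> m n) p / ffun q \<tau> (m+1) (n+1) p
      = cfun q d m n / cfun q d m (n+1) *
        ((gfun q \<tau> (m+1) n p - p P1 / p N2) * (gfun q \<tau> m (n+1) p - cfun q d m (n+1) * (p N1 / p P2)))
        / ((gfun q \<tau> m (n+1) p - p P1 / p N2) * (gfun q \<tau> (m+1) n p - cfun q d (m+1) n * (p N1 / p P2)))"
proof -
  have ratio:
    "((gfun q \<tau> (m+1) n p - p P1 / p N2) * (gfun q \<tau> m (n+1) p - cfun q d m (n+1) * (p N1 / p P2)))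
        / ((gfun q \<tau> m (n+1) p - p P1 / p N2) * (gfun q \<tau> (m+1) n p - cfun q d (m+1) n * (p N1 / p P2)))
     = cfun q d m (n+1) *
       (\<tau> (m+1) n (qpt q p 1 0 1 1) * \<tau> m (n+1) (qpt q p 1 1 1 0)
        * \<tau> (m+2) (n+1) (qpt q p 0 0 1 0) * \<tau> (m+1) (n+2) (qpt q p 1 0 0 0)
       / (\<tau> m (n+1) (qpt q p 1 0 1 1) * \<tau> (m+1) n (qpt q p 1 1 1 0)
        * \<tau> (m+1) (n+2) (qpt q p 0 0 1 0) * \<tau> (m+2) (n+1) (qpt q p 1 0 0 0)))"
    (is "?cross_ratio = _ * ?Y")
    by (rule gfun_cross_ratio[OF assms])
  have "TT q (ffun q \<tau> m n) p / ffun q \<tau> (m+1) (n+1) p = cfun q d m n * ?Y"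
    unfolding TT_ffun[OF p] ffun_tau using p by (simp add: field_simps)
  also have "\<dots> = cfun q d m n / cfun q d m (n+1) * (cfun q d m (n+1) * ?Y)"
    using cfun_nonzero[OF q] by simp
  also have "\<dots> = cfun q d m n / cfun q d m (n+1) * ?cross_ratio"
    unfolding ratio ..
  finally show ?thesis
    by simp
qed

lemma ffun_evolution_mult:
  assumes p: "p \<in> tdom"
    and alpha: "gfun q \<tau> m (n+1) p - p P1 / p N2 \<noteq> 0"
    and beta: "gfun q \<tau> (m+1) n p - cfun q d (m+1) n * (p N1 / p P2) \<noteq> 0"
  shows "TT q (ffun q \<tau> m n) p
      = cfun q d m n / cfun q d m (n+1) *
        ((gfun q \<tau> (m+1) n p - p P1 / p N2) * (gfun q \<tau> m (n+1) p - cfun q d m (n+1) * (p N1 / p P2)))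
        / ((gfun q \<tau> m (n+1) p - p P1 / p N2) * (gfun q \<tau> (m+1) n p - cfun q d (m+1) n * (p N1 / p P2)))
        * ffun q \<tau> (m+1) (n+1) p"
  using ffun_evolution[OF assms] ffun_nonzero[OF p, of "m+1" "n+1"] by (simp add: divide_eq_eq)

lemma TT_ffun_cross_ratio:
  assumes p: "p \<in> tdom"
    and gamma: "TT q (ffun q \<tau> m (n+1)) p - q * (p P1 / p N1) \<noteq> 0"
    and delta: "TT q (ffun q \<tau> (m+1) n) p - cfun q d (m+1) n * (p N2 / p P2) \<noteq> 0"
  shows "((TT q (ffun q \<tau> (m+1) n) p - q * (p P1 / p N1)) * (TT q (ffun q \<tau> m (n+1)) p - cfun q d m (n+1) * (p N2 / p P2)))
        / ((TT q (ffun q \<tau> m (n+1)) p - q * (p P1 / p N1)) * (TT q (ffun q \<tau> (m+1) n) p - cfun q d (m+1) n * (p N2 / p P2)))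
     = cfun q d m (n+1) / cfun q d m n *
       (\<tau> (m+1) n (qpt q p 2 1 1 0) * \<tau> m (n+1) (qpt q p 1 1 1 1)
        * \<tau> (m+2) (n+1) (qpt q p 0 0 1 1) * \<tau> (m+1) (n+2) (qpt q p 1 0 1 0)
       / (\<tau> m (n+1) (qpt q p 2 1 1 0) * \<tau> (m+1) n (qpt q p 1 1 1 1)
        * \<tau> (m+1) (n+2) (qpt q p 0 0 1 1) * \<tau> (m+2) (n+1) (qpt q p 1 0 1 0)))"
proof -
  define p' where "p' = qpt q p 1 1 0 0"
  have p': "p' \<in> tdom"
    unfolding p'_def using p q by simp
  have gamma_shift: "q * (p P1 / p N1) = p' P1 / p' N1"
    unfolding p'_def by simp
  have delta_shift: "cfun q d M N * (p N2 / p P2) = q * cfun q d M N * (p' N2 / p' P2)" for M N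
    unfolding p'_def using q by simp
  have TT_shift: "TT q F p = F p'" for F
    unfolding p'_def using TT_at[OF q] .
  have "p' N1 - p' P1 \<noteq> 0"
    using gamma unfolding TT_shift gamma_shift ffun_minus_gamma[OF p'] by auto
  moreover have "p' P2 - q * p' N2 \<noteq> 0"
    using delta unfolding TT_shift delta_shift ffun_minus_qc_delta[OF p'] by auto
  moreover have "\<tau> K L (qpt q p 2 2 0 0) = q powr d K L * \<tau> K L (qpt q p 1 1 1 1)"
    and "\<tau> K L (qpt q p 2 1 0 (-1)) = q powr d K L * \<tau> K L (qpt q p 1 0 1 0)"
    and "\<tau> K L (qpt q p 1 1 0 0) = q powr d K L * \<tau> K L (qpt q p 0 0 1 1)" for K L
    using homogeneity_at[OF p, of K L 1 1 0 0] homogeneity_at[OF p, of K L 1 0 0 "-1"]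
      homogeneity_at[OF p, of K L 0 0 0 0] by simp_all
  ultimately show ?thesis
    unfolding TT_shift gamma_shift delta_shift ffun_minus_gamma[OF p'] ffun_minus_qc_delta[OF p']
    by (subst common_factor_cross_ratio) (use p q tdom_nonzero[OF p] in \<open>simp_all add: p'_def cfun_eq field_simps\<close>)
qed

lemma gfun_evolution:
  assumes p: "p \<in> tdom"
    and dcond: "\<forall>m n. d m n + d (m+1) (n+1) = d m (n+1) + d (m+1) n"
    and gamma: "TT q (ffun q \<tau> m (n+1)) p - q * (p P1 / p N1) \<noteq> 0"
    and delta: "TT q (ffun q \<tau> (m+1) n) p - cfun q d (m+1) n * (p N2 / p P2) \<noteq> 0"
  shows "TT q (gfun q \<tau> m n) p
      = cfun q d (m+1) n / cfun q d (m+1) (n+1) *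
        ((TT q (ffun q \<tau> (m+1) n) p - q * (p P1 / p N1)) * (TT q (ffun q \<tau> m (n+1)) p - cfun q d m (n+1) * (p N2 / p P2)))
        / ((TT q (ffun q \<tau> m (n+1)) p - q * (p P1 / p N1)) * (TT q (ffun q \<tau> (m+1) n) p - cfun q d (m+1) n * (p N2 / p P2)))
        * gfun q \<tau> (m+1) (n+1) p"
proof -
  have ratio:
    "((TT q (ffun q \<tau> (m+1) n) p - q * (p P1 / p N1)) * (TT q (ffun q \<tau> m (n+1)) p - cfun q d m (n+1) * (p N2 / p P2)))
        / ((TT q (ffun q \<tau> m (n+1)) p - q * (p P1 / p N1)) * (TT q (ffun q \<tau> (m+1) n) p - cfun q d (m+1) n * (p N2 / p P2)))
     = cfun q d m (n+1) / cfun q d m n *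
       (\<tau> (m+1) n (qpt q p 2 1 1 0) * \<tau> m (n+1) (qpt q p 1 1 1 1)
        * \<tau> (m+2) (n+1) (qpt q p 0 0 1 1) * \<tau> (m+1) (n+2) (qpt q p 1 0 1 0)
       / (\<tau> m (n+1) (qpt q p 2 1 1 0) * \<tau> (m+1) n (qpt q p 1 1 1 1)
        * \<tau> (m+1) (n+2) (qpt q p 0 0 1 1) * \<tau> (m+2) (n+1) (qpt q p 1 0 1 0)))"
    (is "?cross_ratio = _ * ?Y")
    using p gamma delta by (rule TT_ffun_cross_ratio)
  have "TT q (gfun q \<tau> m n) p = ?Y * gfun q \<tau> (m+1) (n+1) p"
    unfolding TT_at[OF q] gfun_tau using p q by (simp add: field_simps)
  also have "\<dots> = cfun q d m n / cfun q d m (n+1) * (cfun q d m (n+1) / cfun q d m n * ?Y)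
      * gfun q \<tau> (m+1) (n+1) p"
    using cfun_nonzero[OF q] by simp
  also have "\<dots> = cfun q d (m+1) n / cfun q d (m+1) (n+1) * ?cross_ratio * gfun q \<tau> (m+1) (n+1) p"
    unfolding ratio cfun_ratio_shift[OF dcond] ..
  finally show ?thesis
    by simp
qed

lemma gfun_backward:
  assumes t: "t \<in> tdom"
    and dcond: "\<forall>m n. d m n + d (m+1) (n+1) = d m (n+1) + d (m+1) n"
    and nonzero: "TTinv q (gfun q \<tau> (m+1) (n+1)) t \<noteq> 0"
    and gamma: "ffun q \<tau> m (n+1) t - t P1 / t N1 \<noteq> 0"
    and delta: "ffun q \<tau> (m+1) n t - q * cfun q d (m+1) n * (t N2 / t P2) \<noteq> 0"
  shows "gfun q \<tau> m n t / TTinv q (gfun q \<tau> (m+1) (n+1)) t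
      = cfun q d (m+1) n / cfun q d (m+1) (n+1) *
        ((ffun q \<tau> (m+1) n t - t P1 / t N1) * (ffun q \<tau> m (n+1) t - q * cfun q d m (n+1) * (t N2 / t P2)))
        / ((ffun q \<tau> m (n+1) t - t P1 / t N1) * (ffun q \<tau> (m+1) n t - q * cfun q d (m+1) n * (t N2 / t P2)))"
proof -
  define s where "s = qpt q t (-1) (-1) 0 0"
  have s: "s \<in> tdom"
    unfolding s_def using t q by simp
  have TT_s: "TT q F s = F t" for F
    unfolding s_def TT_at[OF q] using q by simp
  have TTinv_t: "TTinv q F t = F s" for F
    unfolding s_def using TTinv_at[OF q] .
  have gamma_s: "q * (s P1 / s N1) = t P1 / t N1"
    unfolding s_def using q by (simp add: power_int_minus field_simps)
  have delta_s: "cfun q d M N * (s N2 / s P2) = q * cfun q d M N * (t N2 / t P2)" for M N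
    unfolding s_def using q by (simp add: power_int_minus field_simps)
  show ?thesis
    using gfun_evolution[OF s dcond, unfolded TT_s gamma_s delta_s, OF gamma delta] nonzero
    unfolding TTinv_t by simp
qed

end

theorem mainTheorem5:
  fixes q :: complex
    and \<tau> :: "int \<Rightarrow> int \<Rightarrow> (ix \<Rightarrow> complex) \<Rightarrow> complex"
    and d :: "int \<Rightarrow> int \<Rightarrow> complex"
    and m n :: int
    and t :: "ix \<Rightarrow> complex"
  assumes q: "q \<noteq> 0"
    and hier: "qUC_hierarchy q \<tau>"
    and nz: "nowhere_vanishing \<tau>"
    and homog: "\<forall>m n s. s \<in> tdom \<longrightarrow> \<tau> m n (\<lambda>i. q * s i) = q powr (d m n) * \<tau> m n s"
    and dcond: "\<forall>m n. d m n + d (m+1) (n+1) = d m (n+1) + d (m+1) n"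
    and t: "t \<in> tdom"
  shows
   "(ffun q \<tau> (m+1) (n+1) t \<noteq> 0 \<and>
     gfun q \<tau> m (n+1) t - t P1 / t N2 \<noteq> 0 \<and>
     gfun q \<tau> (m+1) n t - cfun q d (m+1) n * (t N1 / t P2) \<noteq> 0 \<and>
     cfun q d m (n+1) \<noteq> 0 \<longrightarrow>
      TT q (ffun q \<tau> m n) t / ffun q \<tau> (m+1) (n+1) t
      = cfun q d m n / cfun q d m (n+1) *
        ((gfun q \<tau> (m+1) n t - t P1 / t N2) * (gfun q \<tau> m (n+1) t - cfun q d m (n+1) * (t N1 / t P2)))
        / ((gfun q \<tau> m (n+1) t - t P1 / t N2) * (gfun q \<tau> (m+1) n t - cfun q d (m+1) n * (t N1 / t P2))))
  \<and>
   (TTinv q (gfun q \<tau> (m+1) (n+1)) t \<noteq> 0 \<and>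
     ffun q \<tau> m (n+1) t - t P1 / t N1 \<noteq> 0 \<and>
     ffun q \<tau> (m+1) n t - q * cfun q d (m+1) n * (t N2 / t P2) \<noteq> 0 \<and>
     cfun q d (m+1) (n+1) \<noteq> 0 \<longrightarrow>
      gfun q \<tau> m n t / TTinv q (gfun q \<tau> (m+1) (n+1)) t
      = cfun q d (m+1) n / cfun q d (m+1) (n+1) *
        ((ffun q \<tau> (m+1) n t - t P1 / t N1) * (ffun q \<tau> m (n+1) t - q * cfun q d m (n+1) * (t N2 / t P2)))
        / ((ffun q \<tau> m (n+1) t - t P1 / t N1) * (ffun q \<tau> (m+1) n t - q * cfun q d (m+1) n * (t N2 / t P2))))
  \<and>
   (gfun q \<tau> m (n+1) t - t P1 / t N2 \<noteq> 0 \<and>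
     gfun q \<tau> (m+1) n t - cfun q d (m+1) n * (t N1 / t P2) \<noteq> 0 \<and>
     cfun q d m (n+1) \<noteq> 0 \<longrightarrow>
      TT q (ffun q \<tau> m n) t
      = cfun q d m n / cfun q d m (n+1) *
        ((gfun q \<tau> (m+1) n t - t P1 / t N2) * (gfun q \<tau> m (n+1) t - cfun q d m (n+1) * (t N1 / t P2)))
        / ((gfun q \<tau> m (n+1) t - t P1 / t N2) * (gfun q \<tau> (m+1) n t - cfun q d (m+1) n * (t N1 / t P2)))
        * ffun q \<tau> (m+1) (n+1) t)
  \<and>
   (TT q (ffun q \<tau> m (n+1)) t - q * (t P1 / t N1) \<noteq> 0 \<and>
     TT q (ffun q \<tau> (m+1) n) t - cfun q d (m+1) n * (t N2 / t P2) \<noteq> 0 \<and>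
     cfun q d (m+1) (n+1) \<noteq> 0 \<longrightarrow>
      TT q (gfun q \<tau> m n) t
      = cfun q d (m+1) n / cfun q d (m+1) (n+1) *
        ((TT q (ffun q \<tau> (m+1) n) t - q * (t P1 / t N1)) * (TT q (ffun q \<tau> m (n+1)) t - cfun q d m (n+1) * (t N2 / t P2)))
        / ((TT q (ffun q \<tau> m (n+1)) t - q * (t P1 / t N1)) * (TT q (ffun q \<tau> (m+1) n) t - cfun q d (m+1) n * (t N2 / t P2)))
        * gfun q \<tau> (m+1) (n+1) t)"
  using ffun_evolution[OF q hier nz homog t] ffun_evolution_mult[OF q hier nz homog t]
    gfun_evolution[OF q hier nz homog t dcond] gfun_backward[OF q hier nz homog t dcond]
  by blast

end
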